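(* Let $A_1,\dots,A_n,B$ be finite formulae (type expressions with no occurrence of $\mu$). If for every $\mathbf{LA}$-frame $(\mathcal W,\rhd,R)$, every hereditary valuation $\xi$ and every $p\in\mathcal W$, $\models^\xi_p A_i$ for all $i$ implies $\models^\xi_p B$, then $\{A_1,\dots,A_n\}\vdash B$ is derivable in $\mathbf{LA}$.
   Context: Finite formulae are generated by $A::=X\mid A\to A\mid\bullet A$ over a countably infinite set of propositional (type) variables. The formal system $\mathbf{LA}$ derives judgments $\Gamma\vdash A$ ($\Gamma$ a finite set of finite formulae; $\bullet\Gamma=\{\bullet C\mid C\in\Gamma\}$) by the rules: (assump) $\Gamma\cup\{A\}\vdash A$; (nec) from $\Gamma_1\vdash A$ infer $\bullet\Gamma_1\cup\Gamma_2\vdash\bullet A$; (4) from $\Gamma\vdash\bullet A$ infer $\Gamma\vdash\bullet\bullet A$; ($\to$I) from $\Gamma\cup\{A\}\vdash B$ infer $\Gamma\vdash A\to B$; ($\to$E) from $\Gamma_1\vdash A\to B$ and $\Gamma_2\vdash A$ infer $\Gamma_1\cup\Gamma_2\vdash B$; (W) from $\Gamma\vdash\bullet(\bullet A\to A)$ infer $\Gamma\vdash\bullet A$; (approx) from $\Gamma\vdash A$ infer $\Gamma\vdash\bullet A$; (L) from $\Gamma\vdash\bullet A\to\bullet B$ infer $\Gamma\vdash\bullet(A\to B)$. Kripke semantics: an $\mathbf{LA}$-frame is a triple $(\mathcal W,\rhd,R)$ with $\mathcal W$ nonempty, $\rhd$ a binary relation with no infinite chain $p_0\rhd p_1\rhd\cdots$,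 $R$ reflexive and transitive, such that: $pRq\rhd r$ implies $p\rhd r$; $p\rhd q$ implies $pRq$; and whenever $p\rhd q\,R\,q'$ there is $r$ with $pRr\rhd q'$ such that $r\rhd s$ implies $q'Rs$ for every $s$. A valuation $\xi$ assigns to each variable a map $\mathcal W\to\{\mathbf t,\mathbf f\}$; it is hereditary if $pRq$ and $\xi(X)(p)=\mathbf t$ imply $\xi(X)(q)=\mathbf t$. Forcing for finite formulae: $\models^\xi_p X$ iff $\xi(X)(p)=\mathbf t$; $\models^\xi_p\bullet A$ iff $\models^\xi_q A$ for all $q$ with $p\rhd q$; $\models^\xi_p A\to B$ iff for all $q$ with $pRq$, $\models^\xi_q A$ implies $\models^\xi_q B$. *)

theory Defs
  imports Main
begin

datatype form = Var nat | Imp form form | Later form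

definition later_set :: "form set \<Rightarrow> form set" where
  "later_set \<Gamma> = Later ` \<Gamma>"

inductive LA :: "form set \<Rightarrow> form \<Rightarrow> bool" where
  assump: "finite \<Gamma> \<Longrightarrow> LA (\<Gamma> \<union> {A}) A"
| nec: "LA \<Gamma>1 A \<Longrightarrow> finite \<Gamma>2 \<Longrightarrow> LA (later_set \<Gamma>1 \<union> \<Gamma>2) (Later A)"
| four: "LA \<Gamma> (Later A) \<Longrightarrow> LA \<Gamma> (Later (Later A))"
| impI: "LA (\<Gamma> \<union> {A}) B \<Longrightarrow> LA \<Gamma> (Imp A B)"
| impE: "LA \<Gamma>1 (Imp A B) \<Longrightarrow> LA \<Gamma>2 A \<Longrightarrow> LA (\<Gamma>1 \<union> \<Gamma>2) B"
| W: "LA \<Gamma> (Later (Imp (Later A) A)) \<Longrightarrow> LA \<Gamma> (Later A)"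
| approx: "LA \<Gamma> A \<Longrightarrow> LA \<Gamma> (Later A)"
| L: "LA \<Gamma> (Imp (Later A) (Later B)) \<Longrightarrow> LA \<Gamma> (Later (Imp A B))"

definition LA_frame :: "'w set \<Rightarrow> ('w \<Rightarrow> 'w \<Rightarrow> bool) \<Rightarrow> ('w \<Rightarrow> 'w \<Rightarrow> bool) \<Rightarrow> bool" where
  "LA_frame Wo T R \<longleftrightarrow>
     Wo \<noteq> {} \<and>
     (\<forall>p q. T p q \<longrightarrow> p \<in> Wo \<and> q \<in> Wo) \<and>
     (\<forall>p q. R p q \<longrightarrow> p \<in> Wo \<and> q \<in> Wo) \<and>
     \<not> (\<exists>f :: nat \<Rightarrow> 'w. \<forall>i. T (f i) (f (Suc i))) \<and>
     (\<forall>p\<in>Wo. R p p) \<and>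
     (\<forall>p q r. R p q \<longrightarrow> R q r \<longrightarrow> R p r) \<and>
     (\<forall>p q r. R p q \<longrightarrow> T q r \<longrightarrow> T p r) \<and>
     (\<forall>p q. T p q \<longrightarrow> R p q) \<and>
     (\<forall>p q q'. T p q \<longrightarrow> R q q' \<longrightarrow>
        (\<exists>r. R p r \<and> T r q' \<and> (\<forall>s. T r s \<longrightarrow> R q' s)))"

definition hereditary :: "('w \<Rightarrow> 'w \<Rightarrow> bool) \<Rightarrow> (nat \<Rightarrow> 'w \<Rightarrow> bool) \<Rightarrow> bool" where
  "hereditary R \<xi> \<longleftrightarrow> (\<forall>X p q. R p q \<longrightarrow> \<xi> X p \<longrightarrow> \<xi> X q)"

fun forces :: "('w \<Rightarrow> 'w \<Rightarrow> bool) \<Rightarrow> ('w \<Rightarrow> 'w \<Rightarrow> bool) \<Rightarrow> (nat \<Rightarrow> 'w \<Rightarrow> bool) \<Rightarrow> 'w \<Rightarrow> form \<Rightarrow> bool" where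
  "forces T R \<xi> p (Var X) \<longleftrightarrow> \<xi> X p"
| "forces T R \<xi> p (Later A) \<longleftrightarrow> (\<forall>q. T p q \<longrightarrow> forces T R \<xi> q A)"
| "forces T R \<xi> p (Imp A B) \<longleftrightarrow> (\<forall>q. R p q \<longrightarrow> forces T R \<xi> q A \<longrightarrow> forces T R \<xi> q B)"

end

theory Submission
  imports Defs "HOL-Library.Countable"
begin

(* Worlds are deductively closed sets of formulas (there is no disjunction, so
   they need not be prime), each carrying a natural-number level; v \<rhd> u means that unlater v \<subseteq> u
   and the level drops, v R u means that v \<subseteq> u and the level does not grow. For subformulas of
   the judgement, forcing coincides with membership: the \<rightarrow> case is the deduction theorem, and if
   \<bullet>A \<notin> v then rule (W) shows that A is not derivable from unlater v \<union> {\<bullet>A}, which yields a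
   \<rhd>-successor refuting A. The remaining frame condition for p \<rhd> q R q' is witnessed by the theory
   generated by p \<union> \<bullet>q', whose unlater part stays inside q' by rule (L). Levels make \<rhd> converse
   well-founded, and since all witnesses arise from finitely many such constructions the model is
   countable and can be carried by nat. *)

section \<open>Derivability from sets of hypotheses\<close>

lemma LA_finite_context: "LA \<Gamma> A \<Longrightarrow> finite \<Gamma>"
  by (induction rule: LA.induct) (auto simp: later_set_def)

lemma LA_mono: "LA \<Gamma> A \<Longrightarrow> \<Gamma> \<subseteq> \<Delta> \<Longrightarrow> finite \<Delta> \<Longrightarrow> LA \<Delta> A"
proof (induction arbitrary: \<Delta> rule: LA.induct)
  case (assump \<Gamma> A)
  then show ?case using LA.assump[of \<Delta> A] by (simp add: insert_absorb)
next
  case (nec \<Gamma>1 A \<Gamma>2)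
  then show ?case using LA.nec[of \<Gamma>1 A \<Delta>] by (simp add: Un_absorb1)
next
  case (impI \<Gamma> A B)
  then show ?case by (auto intro!: LA.impI)
next
  case (impE \<Gamma>1 A B \<Gamma>2)
  then show ?case using LA.impE[of \<Delta> A B \<Delta>] by simp
qed (auto intro: LA.intros)

definition derivable :: "form set \<Rightarrow> form \<Rightarrow> bool" (infix "\<turnstile>" 55) where
  "S \<turnstile> A \<longleftrightarrow> (\<exists>\<Gamma> \<subseteq> S. LA \<Gamma> A)"

lemma derivable_imp_LA: "S \<turnstile> A \<Longrightarrow> finite S \<Longrightarrow> LA S A"
  unfolding derivable_def using LA_mono by blast

lemma derivable_assm: "A \<in> S \<Longrightarrow> S \<turnstile> A"
  unfolding derivable_def using LA.assump[of "{}" A] by auto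

lemma derivable_mono: "S \<turnstile> A \<Longrightarrow> S \<subseteq> S' \<Longrightarrow> S' \<turnstile> A"
  unfolding derivable_def by blast

lemma derivable_mp: "S \<turnstile> Imp A B \<Longrightarrow> S \<turnstile> A \<Longrightarrow> S \<turnstile> B"
proof -
  assume "S \<turnstile> Imp A B" "S \<turnstile> A"
  then obtain \<Gamma>1 \<Gamma>2 where "\<Gamma>1 \<subseteq> S" "LA \<Gamma>1 (Imp A B)" "\<Gamma>2 \<subseteq> S" "LA \<Gamma>2 A"
    unfolding derivable_def by blast
  then have "\<Gamma>1 \<union> \<Gamma>2 \<subseteq> S" "LA (\<Gamma>1 \<union> \<Gamma>2) B"
    by (auto intro: LA.impE)
  then show ?thesis
    unfolding derivable_def by blast
qed

lemma derivable_deduction: "insert A S \<turnstile> B \<Longrightarrow> S \<turnstile> Imp A B"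
proof -
  assume "insert A S \<turnstile> B"
  then obtain \<Gamma> where "\<Gamma> \<subseteq> insert A S" "LA \<Gamma> B"
    unfolding derivable_def by blast
  moreover have "\<Gamma> \<subseteq> (\<Gamma> - {A}) \<union> {A}" "finite ((\<Gamma> - {A}) \<union> {A})"
    using LA_finite_context[OF \<open>LA \<Gamma> B\<close>] by auto
  ultimately have "LA ((\<Gamma> - {A}) \<union> {A}) B"
    using LA_mono by blast
  then have "LA (\<Gamma> - {A}) (Imp A B)"
    by (rule LA.impI)
  with \<open>\<Gamma> \<subseteq> insert A S\<close> show ?thesis
    unfolding derivable_def by blast
qed

lemma derivable_nec: "S \<turnstile> A \<Longrightarrow> Later ` S \<turnstile> Later A"
proof -
  assume "S \<turnstile> A"
  then obtain \<Gamma> where "\<Gamma> \<subseteq> S" "LA \<Gamma> A"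
    unfolding derivable_def by blast
  then have "LA (Later ` \<Gamma>) (Later A)"
    using LA.nec[of \<Gamma> A "{}"] by (simp add: later_set_def)
  with image_mono[OF \<open>\<Gamma> \<subseteq> S\<close>, of Later] show ?thesis
    unfolding derivable_def by blast
qed

lemma derivable_approx: "S \<turnstile> A \<Longrightarrow> S \<turnstile> Later A"
  unfolding derivable_def using LA.approx by blast

lemma derivable_W: "S \<turnstile> Later (Imp (Later A) A) \<Longrightarrow> S \<turnstile> Later A"
  unfolding derivable_def using LA.W by blast

lemma derivable_L: "S \<turnstile> Imp (Later A) (Later B) \<Longrightarrow> S \<turnstile> Later (Imp A B)"
  unfolding derivable_def using LA.L by blast

lemma derivable_cut_finite:
  "finite H \<Longrightarrow> S \<union> H \<turnstile> B \<Longrightarrow> \<forall>C\<in>H. S \<turnstile> C \<Longrightarrow> S \<turnstile> B"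
proof (induction H arbitrary: B rule: finite_induct)
  case (insert C H)
  then have "S \<turnstile> Imp C B"
    by (simp add: derivable_deduction)
  with insert.prems show ?case
    by (blast intro: derivable_mp)
qed simp

lemma derivable_cut: "T \<turnstile> B \<Longrightarrow> \<forall>C\<in>T. S \<turnstile> C \<Longrightarrow> S \<turnstile> B"
proof -
  assume "T \<turnstile> B" and T: "\<forall>C\<in>T. S \<turnstile> C"
  then obtain \<Gamma> where "\<Gamma> \<subseteq> T" "LA \<Gamma> B"
    unfolding derivable_def by blast
  then have "S \<union> \<Gamma> \<turnstile> B"
    unfolding derivable_def by blast
  moreover have "\<forall>C\<in>\<Gamma>. S \<turnstile> C"
    using T \<open>\<Gamma> \<subseteq> T\<close> by blast
  ultimately show ?thesis
    using derivable_cut_finite LA_finite_context[OF \<open>LA \<Gamma> B\<close>] by blast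
qed

section \<open>Deductively closed theories\<close>

definition Cn :: "form set \<Rightarrow> form set" where
  "Cn S = {A. S \<turnstile> A}"

definition deductively_closed :: "form set \<Rightarrow> bool" where
  "deductively_closed v \<longleftrightarrow> (\<forall>A. v \<turnstile> A \<longrightarrow> A \<in> v)"

definition unlater :: "form set \<Rightarrow> form set" where
  "unlater v = {A. Later A \<in> v}"

lemma deductively_closed_Cn: "deductively_closed (Cn S)"
  unfolding deductively_closed_def Cn_def using derivable_cut by blast

lemma subset_Cn: "S \<subseteq> Cn S"
  unfolding Cn_def using derivable_assm by blast

lemma deductively_closed_mp:
  "deductively_closed v \<Longrightarrow> Imp A B \<in> v \<Longrightarrow> A \<in> v \<Longrightarrow> B \<in> v"
  unfolding deductively_closed_def using derivable_mp derivable_assm by blast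

lemma derivable_unlater_imp_Later_mem:
  assumes "deductively_closed v" "unlater v \<turnstile> A"
  shows "Later A \<in> v"
proof -
  have "Later ` unlater v \<turnstile> Later A"
    using derivable_nec[OF assms(2)] .
  moreover have "Later ` unlater v \<subseteq> v"
    unfolding unlater_def by auto
  ultimately show ?thesis
    using assms(1) derivable_mono unfolding deductively_closed_def by blast
qed

lemma subset_unlater: "deductively_closed v \<Longrightarrow> v \<subseteq> unlater v"
  unfolding deductively_closed_def unlater_def using derivable_assm derivable_approx by blast

lemma unlater_mono: "v \<subseteq> u \<Longrightarrow> unlater v \<subseteq> unlater u"
  unfolding unlater_def by blast

lemma unlater_funpow_mono: "v \<subseteq> u \<Longrightarrow> (unlater ^^ j) v \<subseteq> (unlater ^^ j) u"
  by (induction j) (auto dest: unlater_mono)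

lemma Loeb_extension:
  assumes "deductively_closed v" "Later A \<notin> v"
  shows "A \<notin> Cn (insert (Later A) (unlater v))"
proof
  assume "A \<in> Cn (insert (Later A) (unlater v))"
  then have "unlater v \<turnstile> Imp (Later A) A"
    unfolding Cn_def by (simp add: derivable_deduction)
  then have "v \<turnstile> Later (Imp (Later A) A)"
    using assms(1) derivable_assm derivable_unlater_imp_Later_mem by blast
  then have "Later A \<in> v"
    using assms(1) derivable_W unfolding deductively_closed_def by blast
  with assms(2) show False ..
qed

lemma derivable_Later_finite_imp_mem:
  assumes "finite H" "H \<subseteq> u" "v \<union> Later ` H \<turnstile> Later C"
    and "deductively_closed v" "deductively_closed u" "unlater v \<subseteq> u"
  shows "C \<in> u"
  using assms(1-3)
proof (induction H arbitrary: C rule: finite_induct)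
  case empty
  then have "Later C \<in> v"
    using assms(4) unfolding deductively_closed_def by simp
  with assms(6) show ?case
    unfolding unlater_def by blast
next
  case (insert D H)
  then have "v \<union> Later ` H \<turnstile> Imp (Later D) (Later C)"
    by (simp add: derivable_deduction)
  then have "Imp D C \<in> u"
    using insert by (simp add: derivable_L)
  with insert.prems(1) show ?case
    using deductively_closed_mp[OF assms(5)] by blast
qed

lemma unlater_Cn_Later_subset:
  assumes "deductively_closed v" "deductively_closed u" "unlater v \<subseteq> u"
  shows "unlater (Cn (v \<union> Later ` u)) \<subseteq> u"
proof
  fix C assume "C \<in> unlater (Cn (v \<union> Later ` u))"
  then obtain \<Gamma> where \<Gamma>: "\<Gamma> \<subseteq> v \<union> Later ` u" "LA \<Gamma> (Later C)"
    unfolding unlater_def Cn_def derivable_def by blast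
  define H where "H = {D \<in> u. Later D \<in> \<Gamma>}"
  have "finite H"
    using LA_finite_context[OF \<Gamma>(2)] finite_vimageI[of \<Gamma> Later]
    by (auto simp: H_def inj_on_def intro: finite_subset)
  moreover have "v \<union> Later ` H \<turnstile> Later C"
    using \<Gamma> unfolding derivable_def H_def by (blast intro: derivable_mono)
  ultimately show "C \<in> u"
    using derivable_Later_finite_imp_mem[OF _ _ _ assms] unfolding H_def by blast
qed

section \<open>Levels\<close>

(* The Loeb successor Cn (insert (\<bullet>A) (unlater v)) of v, for \<bullet>A \<in> \<Psi> - v, has a smaller level:
   for j = 0 it contains one more formula of \<Psi>, for j > 0 it contains unlater v, so j drops. *)
definition admissible_level :: "form set \<Rightarrow> nat \<Rightarrow> form set \<Rightarrow> bool" where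
  "admissible_level \<Psi> n v \<longleftrightarrow> (\<exists>j. j + card (\<Psi> - (unlater ^^ j) v) \<le> n)"

lemma admissible_level_card: "finite \<Psi> \<Longrightarrow> admissible_level \<Psi> (card \<Psi>) v"
  unfolding admissible_level_def by (intro exI[of _ 0]) (auto intro: card_mono)

lemma admissible_level_mono:
  assumes "finite \<Psi>" "admissible_level \<Psi> n v" "v \<subseteq> u"
  shows "admissible_level \<Psi> n u"
proof -
  obtain j where j: "j + card (\<Psi> - (unlater ^^ j) v) \<le> n"
    using assms(2) unfolding admissible_level_def by blast
  have "card (\<Psi> - (unlater ^^ j) u) \<le> card (\<Psi> - (unlater ^^ j) v)"
    using unlater_funpow_mono[OF assms(3)] assms(1) by (intro card_mono) auto
  with j show ?thesis
    unfolding admissible_level_def by (intro exI[of _ j]) auto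
qed

lemma admissible_level_Suc:
  assumes "finite \<Psi>" "admissible_level \<Psi> n v" "v \<subseteq> unlater u"
  shows "admissible_level \<Psi> (Suc n) u"
proof -
  obtain j where j: "j + card (\<Psi> - (unlater ^^ j) v) \<le> n"
    using assms(2) unfolding admissible_level_def by blast
  have "(unlater ^^ j) v \<subseteq> (unlater ^^ Suc j) u"
    using unlater_funpow_mono[OF assms(3)] by (simp add: funpow_Suc_right del: funpow.simps)
  then have "card (\<Psi> - (unlater ^^ Suc j) u) \<le> card (\<Psi> - (unlater ^^ j) v)"
    using assms(1) by (intro card_mono) auto
  with j show ?thesis
    unfolding admissible_level_def by (intro exI[of _ "Suc j"]) auto
qed

lemma admissible_level_pred:
  assumes "finite \<Psi>" "admissible_level \<Psi> n v" "v \<subseteq> u" "unlater v \<subseteq> u"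
    and "B \<in> \<Psi> \<inter> u - v"
  shows "\<exists>m. n = Suc m \<and> admissible_level \<Psi> m u"
proof -
  obtain j where j: "j + card (\<Psi> - (unlater ^^ j) v) \<le> n"
    using assms(2) unfolding admissible_level_def by blast
  show ?thesis
  proof (cases j)
    case 0
    have "card (\<Psi> - u) < card (\<Psi> - v)"
      using assms(1,3,5) by (intro psubset_card_mono) auto
    with j 0 show ?thesis
      unfolding admissible_level_def by (intro exI[of _ "n - 1"] conjI exI[of _ 0]) auto
  next
    case (Suc i)
    have "(unlater ^^ j) v \<subseteq> (unlater ^^ i) u"
      using Suc unlater_funpow_mono[OF assms(4)] by (simp add: funpow_Suc_right del: funpow.simps)
    then have "card (\<Psi> - (unlater ^^ i) u) \<le> card (\<Psi> - (unlater ^^ j) v)"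
      using assms(1) by (intro card_mono) auto
    with j Suc show ?thesis
      unfolding admissible_level_def by (intro exI[of _ "n - 1"] conjI exI[of _ i]) auto
  qed
qed

section \<open>The canonical model\<close>

fun subformulas :: "form \<Rightarrow> form set" where
  "subformulas (Var X) = {Var X}"
| "subformulas (Imp A B) = insert (Imp A B) (subformulas A \<union> subformulas B)"
| "subformulas (Later A) = insert (Later A) (subformulas A)"

lemma subformulas_refl: "A \<in> subformulas A"
  by (cases A) auto

lemma finite_subformulas: "finite (subformulas A)"
  by (induction A) auto

lemma subformulas_trans: "A \<in> subformulas B \<Longrightarrow> subformulas A \<subseteq> subformulas B"
  by (induction B) auto

instance form :: countable
  by countable_datatype

(* Names for the theories serving as witnesses in the canonical model; they keep it countable. *)
datatype thy_expr =
    Base "form list"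
  | Extend thy_expr form
  | Loeb_step thy_expr form
  | Join thy_expr thy_expr

instance thy_expr :: countable
  by countable_datatype

primrec theory_of :: "thy_expr \<Rightarrow> form set" where
  "theory_of (Base As) = Cn (set As)"
| "theory_of (Extend e A) = Cn (insert A (theory_of e))"
| "theory_of (Loeb_step e A) = Cn (insert (Later A) (unlater (theory_of e)))"
| "theory_of (Join e e') = Cn (theory_of e \<union> Later ` theory_of e')"

lemma deductively_closed_theory_of: "deductively_closed (theory_of e)"
  by (cases e) (simp_all add: deductively_closed_Cn)

locale canonical_model =
  fixes \<Psi> :: "form set"
  assumes finite_\<Psi>: "finite \<Psi>"
    and subformulas_closed: "A \<in> \<Psi> \<Longrightarrow> subformulas A \<subseteq> \<Psi>"
begin

abbreviation level :: "nat \<Rightarrow> nat" where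
  "level a \<equiv> fst (from_nat a :: nat \<times> thy_expr)"

abbreviation expr :: "nat \<Rightarrow> thy_expr" where
  "expr a \<equiv> snd (from_nat a :: nat \<times> thy_expr)"

abbreviation thy :: "nat \<Rightarrow> form set" where
  "thy a \<equiv> theory_of (expr a)"

definition worlds :: "nat set" where
  "worlds = {a. admissible_level \<Psi> (level a) (thy a)}"

definition later_rel :: "nat \<Rightarrow> nat \<Rightarrow> bool" where
  "later_rel a b \<longleftrightarrow> a \<in> worlds \<and> b \<in> worlds \<and> level b < level a \<and> unlater (thy a) \<subseteq> thy b"

definition acc_rel :: "nat \<Rightarrow> nat \<Rightarrow> bool" where
  "acc_rel a b \<longleftrightarrow> a \<in> worlds \<and> b \<in> worlds \<and> level b \<le> level a \<and> thy a \<subseteq> thy b"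

definition val :: "nat \<Rightarrow> nat \<Rightarrow> bool" where
  "val X a \<longleftrightarrow> Var X \<in> thy a"

abbreviation canonical_forces :: "nat \<Rightarrow> form \<Rightarrow> bool" where
  "canonical_forces \<equiv> forces later_rel acc_rel val"

lemma Base_world: "to_nat (card \<Psi>, Base As) \<in> worlds"
  unfolding worlds_def using admissible_level_card[OF finite_\<Psi>] by simp

lemma Extend_witness:
  assumes "a \<in> worlds" "Imp A B \<notin> thy a"
  shows "\<exists>b. acc_rel a b \<and> A \<in> thy b \<and> B \<notin> thy b"
proof -
  define u where "u = theory_of (Extend (expr a) A)"
  have "thy a \<subseteq> u" "A \<in> u"
    unfolding u_def using subset_Cn[of "insert A (thy a)"] by auto
  moreover have "admissible_level \<Psi> (level a) u"
    using assms(1) admissible_level_mono[OF finite_\<Psi>] \<open>thy a \<subseteq> u\<close>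
    unfolding worlds_def by blast
  moreover have "B \<notin> u"
  proof
    assume "B \<in> u"
    then have "thy a \<turnstile> Imp A B"
      by (simp add: u_def Cn_def derivable_deduction)
    with assms(2) show False
      using deductively_closed_theory_of unfolding deductively_closed_def by blast
  qed
  ultimately show ?thesis
    using assms(1) unfolding acc_rel_def
    by (intro exI[of _ "to_nat (level a, Extend (expr a) A)"]) (simp add: u_def worlds_def)
qed

lemma Loeb_witness:
  assumes "a \<in> worlds" "Later A \<in> \<Psi>" "Later A \<notin> thy a"
  shows "\<exists>b. later_rel a b \<and> A \<notin> thy b"
proof -
  define u where "u = theory_of (Loeb_step (expr a) A)"
  have closed: "deductively_closed (thy a)"
    by (rule deductively_closed_theory_of)
  have "unlater (thy a) \<subseteq> u" "Later A \<in> u"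
    unfolding u_def using subset_Cn[of "insert (Later A) (unlater (thy a))"] by auto
  moreover have "thy a \<subseteq> u"
    using subset_unlater[OF closed] \<open>unlater (thy a) \<subseteq> u\<close> by blast
  ultimately obtain m where "level a = Suc m" "admissible_level \<Psi> m u"
    using admissible_level_pred[OF finite_\<Psi>, of "level a" "thy a" u "Later A"] assms
    unfolding worlds_def by auto
  moreover have "A \<notin> u"
    unfolding u_def using Loeb_extension[OF closed assms(3)] by simp
  ultimately show ?thesis
    using assms(1) \<open>unlater (thy a) \<subseteq> u\<close> unfolding later_rel_def
    by (intro exI[of _ "to_nat (m, Loeb_step (expr a) A)"]) (simp add: u_def worlds_def)
qed

lemma forces_Imp_iff:
  assumes "a \<in> worlds"
    and IH_A: "\<And>b. b \<in> worlds \<Longrightarrow> canonical_forces b A \<longleftrightarrow> A \<in> thy b"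
    and IH_B: "\<And>b. b \<in> worlds \<Longrightarrow> canonical_forces b B \<longleftrightarrow> B \<in> thy b"
  shows "canonical_forces a (Imp A B) \<longleftrightarrow> Imp A B \<in> thy a"
proof
  assume forced: "canonical_forces a (Imp A B)"
  show "Imp A B \<in> thy a"
  proof (rule ccontr)
    assume "Imp A B \<notin> thy a"
    then obtain b where "acc_rel a b" "A \<in> thy b" "B \<notin> thy b"
      using Extend_witness[OF assms(1)] by blast
    moreover have "b \<in> worlds"
      using \<open>acc_rel a b\<close> unfolding acc_rel_def by blast
    ultimately show False
      using forced IH_A IH_B by auto
  qed
next
  assume "Imp A B \<in> thy a"
  have "canonical_forces b B" if "acc_rel a b" "canonical_forces b A" for b
  proof -
    have "b \<in> worlds" "Imp A B \<in> thy b"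
      using that(1) \<open>Imp A B \<in> thy a\<close> unfolding acc_rel_def by auto
    with that(2) IH_A IH_B show ?thesis
      using deductively_closed_mp[OF deductively_closed_theory_of] by blast
  qed
  then show "canonical_forces a (Imp A B)"
    by simp
qed

lemma forces_Later_iff:
  assumes "a \<in> worlds" "Later A \<in> \<Psi>"
    and IH: "\<And>b. b \<in> worlds \<Longrightarrow> canonical_forces b A \<longleftrightarrow> A \<in> thy b"
  shows "canonical_forces a (Later A) \<longleftrightarrow> Later A \<in> thy a"
proof
  assume forced: "canonical_forces a (Later A)"
  show "Later A \<in> thy a"
  proof (rule ccontr)
    assume "Later A \<notin> thy a"
    then obtain b where "later_rel a b" "A \<notin> thy b"
      using Loeb_witness[OF assms(1,2)] by blast
    moreover have "b \<in> worlds"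
      using \<open>later_rel a b\<close> unfolding later_rel_def by blast
    ultimately show False
      using forced IH by auto
  qed
next
  assume "Later A \<in> thy a"
  then show "canonical_forces a (Later A)"
    using IH unfolding later_rel_def unlater_def by auto
qed

theorem truth_lemma: "A \<in> \<Psi> \<Longrightarrow> a \<in> worlds \<Longrightarrow> canonical_forces a A \<longleftrightarrow> A \<in> thy a"
proof (induction A arbitrary: a)
  case (Var X)
  then show ?case
    by (simp add: val_def)
next
  case (Imp A B)
  have "A \<in> \<Psi>" "B \<in> \<Psi>"
    using subformulas_closed[OF Imp.prems(1)] subformulas_refl by auto
  with Imp show ?case
    using forces_Imp_iff by blast
next
  case (Later A)
  have "A \<in> \<Psi>"
    using subformulas_closed[OF Later.prems(1)] subformulas_refl by auto
  with Later show ?case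
    using forces_Later_iff by blast
qed

lemma acc_rel_trans: "acc_rel a b \<Longrightarrow> acc_rel b c \<Longrightarrow> acc_rel a c"
  unfolding acc_rel_def by auto

lemma acc_later_rel_trans: "acc_rel a b \<Longrightarrow> later_rel b c \<Longrightarrow> later_rel a c"
  unfolding acc_rel_def later_rel_def using unlater_mono[of "thy a" "thy b"] by auto

lemma later_rel_imp_acc_rel: "later_rel a b \<Longrightarrow> acc_rel a b"
  unfolding acc_rel_def later_rel_def
  using subset_unlater[OF deductively_closed_theory_of, of "expr a"] by auto

lemma no_infinite_later_chain: "\<nexists>f. \<forall>i. later_rel (f i) (f (Suc i))"
proof
  assume "\<exists>f. \<forall>i. later_rel (f i) (f (Suc i))"
  then obtain f where "\<forall>i. later_rel (f i) (f (Suc i))"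
    by blast
  then have "\<forall>i. (f (Suc i), f i) \<in> measure level"
    by (simp add: later_rel_def)
  then show False
    using wf_iff_no_infinite_down_chain[of "measure level"] by auto
qed

lemma later_acc_witness:
  assumes "later_rel a b" "acc_rel b c"
  shows "\<exists>d. acc_rel a d \<and> later_rel d c \<and> (\<forall>s. later_rel d s \<longrightarrow> acc_rel c s)"
proof -
  define u where "u = theory_of (Join (expr a) (expr c))"
  have "thy a \<subseteq> u" "Later ` thy c \<subseteq> u"
    unfolding u_def using subset_Cn[of "thy a \<union> Later ` thy c"] by auto
  then have c_unlater: "thy c \<subseteq> unlater u"
    unfolding unlater_def by auto
  have "unlater (thy a) \<subseteq> thy c"
    using assms unfolding later_rel_def acc_rel_def by auto
  then have unlater_u: "unlater u \<subseteq> thy c"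
    unfolding u_def using unlater_Cn_Later_subset deductively_closed_theory_of by simp
  have "c \<in> worlds"
    using assms(2) unfolding acc_rel_def by blast
  then have "admissible_level \<Psi> (Suc (level c)) u"
    using admissible_level_Suc[OF finite_\<Psi> _ c_unlater] unfolding worlds_def by simp
  moreover have "level c < level a"
    using assms unfolding later_rel_def acc_rel_def by auto
  ultimately show ?thesis
    using assms \<open>thy a \<subseteq> u\<close> \<open>c \<in> worlds\<close> c_unlater unlater_u
    unfolding acc_rel_def later_rel_def
    by (intro exI[of _ "to_nat (Suc (level c), Join (expr a) (expr c))"]) (auto simp: u_def worlds_def)
qed

theorem LA_frame_canonical: "LA_frame worlds later_rel acc_rel"
  unfolding LA_frame_def
proof (intro conjI)
  show "worlds \<noteq> {}"
    using Base_world by blast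
  show "\<forall>a b. later_rel a b \<longrightarrow> a \<in> worlds \<and> b \<in> worlds"
    unfolding later_rel_def by blast
  show "\<forall>a b. acc_rel a b \<longrightarrow> a \<in> worlds \<and> b \<in> worlds"
    unfolding acc_rel_def by blast
  show "\<forall>a\<in>worlds. acc_rel a a"
    unfolding acc_rel_def by blast
qed (use no_infinite_later_chain acc_rel_trans acc_later_rel_trans later_rel_imp_acc_rel
      later_acc_witness in blast)+

lemma hereditary_canonical: "hereditary acc_rel val"
  unfolding hereditary_def acc_rel_def val_def by auto

end

theorem theorem10:
  fixes As :: "form list" and B :: form
  assumes "\<And>(Wo :: nat set) T R \<xi> p.
             LA_frame Wo T R \<Longrightarrow> hereditary R \<xi> \<Longrightarrow> p \<in> Wo \<Longrightarrow>
             (\<forall>A\<in>set As. forces T R \<xi> p A) \<Longrightarrow> forces T R \<xi> p B"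
  shows "LA (set As) B"
proof -
  define \<Psi> where "\<Psi> = \<Union> (subformulas ` set (B # As))"
  interpret canonical_model \<Psi>
    by unfold_locales (auto simp: \<Psi>_def finite_subformulas dest: subformulas_trans)
  have in_\<Psi>: "A \<in> \<Psi>" if "A \<in> set (B # As)" for A
    using that subformulas_refl unfolding \<Psi>_def by blast
  let ?a = "to_nat (card \<Psi>, Base As)"
  have "\<forall>A\<in>set As. canonical_forces ?a A"
    using truth_lemma[OF _ Base_world] in_\<Psi> subset_Cn[of "set As"] by auto
  then have "canonical_forces ?a B"
    using assms[OF LA_frame_canonical hereditary_canonical Base_world] by blast
  then have "set As \<turnstile> B"
    using truth_lemma[OF _ Base_world] in_\<Psi> by (auto simp: Cn_def)
  then show ?thesis
    using derivable_imp_LA by blast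
qed

end
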